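(* Let $I$ and $J$ be finitely generated graded right $A$-submodules of $Q_{\mathrm{gr}}(A)$ with structure constants $\{c_i\}_{i\in\mathbb{Z}}$ and $\{d_i\}_{i\in\mathbb{Z}}$ respectively. Then $I\cong J$ as graded right $A$-modules if and only if $c_i=d_i$ for all $i\in\mathbb{Z}$.
   Context: $\Bbbk$ is an algebraically closed field of characteristic $0$; $\sigma$ is the automorphism of $\Bbbk[z]$ (and $\Bbbk(z)$) with $\sigma(z)=z+1$. For $\alpha\in\Bbbk$, $f=z(z+\alpha)$ and $A=A(f)$ is generated by $\Bbbk[z]$, $x$, $y$ with $xz=(z+1)x$, $yz=(z-1)y$, $xy=f$, $yx=\sigma^{-1}(f)$, graded by $\deg x=1,\deg y=-1,\deg z=0$. $Q_{\mathrm{gr}}(A)$ is the graded quotient ring (localization at nonzero homogeneous elements), which equals the skew Laurent ring $\Bbbk(z)[x,x^{-1};\sigma]$ (with $xg=\sigma(g)x$ and $y=x^{-1}f$). Every finitely generated graded right $A$-submodule $I\subseteq Q_{\mathrm{gr}}(A)$ can be written $I=\bigoplus_{i\in\mathbb{Z}}\Bbbk[z]a_ix^i$ with $a_i\in\Bbbk(z)$ nonzero; then $c_i:=a_ia_{i+1}^{-1}$, normalized to be monic, is a polynomial in $\{1,\sigma^i(z),\sigma^i(z+\alpha),\sigma^i(f)\}$. The sequence $\{c_i\}$ is called the structure constants of $I$ (it does not depend on the choice of generators $a_i$). *)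

theory Defs
  imports "HOL-Computational_Algebra.Polynomial_Factorial"
begin

text \<open>The base field k has type 'k::field_char_0; algebraic closedness is an explicit
hypothesis of the theorem.  k(z) is the fraction field 'k poly fract.
An element of Q_gr(A) = k(z)[x,x^-1;sigma] is a finitely supported function
q :: int => 'k poly fract, standing for the sum over i of (q i) x^i.\<close>

type_synonym 'k qel = "int \<Rightarrow> 'k poly fract"

definition alg_closed :: "'k::field itself \<Rightarrow> bool" where
  "alg_closed _ \<longleftrightarrow> (\<forall>p::'k poly. degree p > 0 \<longrightarrow> (\<exists>x. poly p x = 0))"

text \<open>sigma^n on k[z]: p(z) maps to p(z+n).\<close>
definition psh :: "int \<Rightarrow> 'k::field poly \<Rightarrow> 'k poly" where
  "psh n p = pcompose p [:of_int n, 1:]"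

definition fsh :: "int \<Rightarrow> 'k::field poly fract \<Rightarrow> 'k poly fract" where
  "fsh n g = (let pq = (SOME pq. snd pq \<noteq> 0 \<and> g = Fract (fst pq) (snd pq))
              in Fract (psh n (fst pq)) (psh n (snd pq)))"

definition Qgr :: "'k::field qel set" where
  "Qgr = {q. finite {i. q i \<noteq> 0}}"

definition qzero :: "'k::field qel" where "qzero = (\<lambda>_. 0)"

definition qadd :: "'k::field qel \<Rightarrow> 'k qel \<Rightarrow> 'k qel" where
  "qadd p q = (\<lambda>n. p n + q n)"

text \<open>Multiplication in the skew Laurent ring: (g x^i)(h x^j) = g sigma^i(h) x^(i+j).\<close>
definition qmult :: "'k::field qel \<Rightarrow> 'k qel \<Rightarrow> 'k qel" where
  "qmult p q = (\<lambda>n. \<Sum>i\<in>{i. p i \<noteq> 0}. p i * fsh i (q (n - i)))"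

definition qhom :: "int \<Rightarrow> 'k::field poly fract \<Rightarrow> 'k qel" where
  "qhom i g = (\<lambda>j. if j = i then g else 0)"

definition homog :: "int \<Rightarrow> 'k::field qel set" where
  "homog i = {q. \<forall>j. j \<noteq> i \<longrightarrow> q j = 0}"

text \<open>f = z(z+alpha); y = x^-1 f = sigma^-1(f) x^-1.\<close>
definition fpol :: "'k::field \<Rightarrow> 'k poly" where
  "fpol \<alpha> = [:0, 1:] * [:\<alpha>, 1:]"

definition qx :: "'k::field qel" where "qx = qhom 1 1"

definition qy :: "'k::field \<Rightarrow> 'k qel" where
  "qy \<alpha> = qhom (-1) (to_fract (psh (-1) (fpol \<alpha>)))"

text \<open>The algebra A = A(f), as the subring of Q_gr(A) generated by k[z], x and y.\<close>
inductive_set Aset :: "'k::field \<Rightarrow> 'k qel set" for \<alpha> :: 'k where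
  poly_in: "qhom 0 (to_fract h) \<in> Aset \<alpha>"
| x_in: "qx \<in> Aset \<alpha>"
| y_in: "qy \<alpha> \<in> Aset \<alpha>"
| add_in: "a \<in> Aset \<alpha> \<Longrightarrow> b \<in> Aset \<alpha> \<Longrightarrow> qadd a b \<in> Aset \<alpha>"
| mult_in: "a \<in> Aset \<alpha> \<Longrightarrow> b \<in> Aset \<alpha> \<Longrightarrow> qmult a b \<in> Aset \<alpha>"

definition right_submod :: "'k::field \<Rightarrow> 'k qel set \<Rightarrow> bool" where
  "right_submod \<alpha> I \<longleftrightarrow> I \<subseteq> Qgr \<and> qzero \<in> I \<and>
     (\<forall>p\<in>I. \<forall>q\<in>I. qadd p q \<in> I) \<and>
     (\<forall>p\<in>I. \<forall>a\<in>Aset \<alpha>. qmult p a \<in> I)"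

definition graded :: "'k::field qel set \<Rightarrow> bool" where
  "graded I \<longleftrightarrow> (\<forall>q\<in>I. \<forall>i. qhom i (q i) \<in> I)"

definition qsum :: "'k::field qel set \<Rightarrow> ('k qel \<Rightarrow> 'k qel) \<Rightarrow> 'k qel" where
  "qsum G h = (\<lambda>n. \<Sum>g\<in>G. h g n)"

definition fin_gen :: "'k::field \<Rightarrow> 'k qel set \<Rightarrow> bool" where
  "fin_gen \<alpha> I \<longleftrightarrow> (\<exists>G. finite G \<and> G \<subseteq> I \<and>
     I = {qsum G (\<lambda>g. qmult g (a g)) | a. \<forall>g\<in>G. a g \<in> Aset \<alpha>})"

definition fg_graded_submod :: "'k::field \<Rightarrow> 'k qel set \<Rightarrow> bool" where
  "fg_graded_submod \<alpha> I \<longleftrightarrow> right_submod \<alpha> I \<and> graded I \<and> fin_gen \<alpha> I"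

definition graded_iso :: "'k::field \<Rightarrow> 'k qel set \<Rightarrow> 'k qel set \<Rightarrow> bool" where
  "graded_iso \<alpha> I J \<longleftrightarrow> (\<exists>\<phi>. bij_betw \<phi> I J \<and>
     (\<forall>p\<in>I. \<forall>q\<in>I. \<phi> (qadd p q) = qadd (\<phi> p) (\<phi> q)) \<and>
     (\<forall>p\<in>I. \<forall>a\<in>Aset \<alpha>. \<phi> (qmult p a) = qmult (\<phi> p) a) \<and>
     (\<forall>p\<in>I. \<forall>i. p \<in> homog i \<longrightarrow> \<phi> p \<in> homog i))"

definition struct_consts :: "'k::field qel set \<Rightarrow> (int \<Rightarrow> 'k poly) \<Rightarrow> bool" where
  "struct_consts I c \<longleftrightarrow> (\<exists>a :: int \<Rightarrow> 'k poly fract.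
     (\<forall>i. a i \<noteq> 0 \<and> {g. qhom i g \<in> I} = {to_fract p * a i | p. True}) \<and>
     (\<forall>i. lead_coeff (c i) = 1 \<and>
          (\<exists>u::'k. u \<noteq> 0 \<and> to_fract (c i) = to_fract [:u:] * (a i / a (i + 1)))))"

end

theory Submission
  imports Defs
begin

text \<open>Write \<open>I = \<Oplus>\<^sub>i k[z] a\<^sub>i x\<^sup>i\<close> and \<open>J = \<Oplus>\<^sub>i k[z] b\<^sub>i x\<^sup>i\<close>. A graded isomorphism is
\<open>k[z]\<close>-linear in each degree, so it sends \<open>a\<^sub>i x\<^sup>i\<close> to \<open>\<tau>\<^sub>i b\<^sub>i x\<^sup>i\<close> with \<open>\<tau>\<^sub>i\<close> a unit of \<open>k[z]\<close>,
i.e. a nonzero constant; compatibility with right multiplication by \<open>x\<close> then shows that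
\<open>a\<^sub>i/a\<^sub>i\<^sub>+\<^sub>1\<close> and \<open>b\<^sub>i/b\<^sub>i\<^sub>+\<^sub>1\<close> differ by a nonzero constant, so their monic normalisations agree.
Conversely, if the structure constants agree then all ratios \<open>b\<^sub>i/a\<^sub>i\<close> are constant multiples
of \<open>Q = b\<^sub>0/a\<^sub>0\<close>, and left multiplication of coefficients by \<open>Q\<close> is a graded isomorphism
\<open>I \<rightarrow> J\<close>.\<close>

lemma psh_mult: "psh n (p * q) = psh n p * psh n q"
  by (simp add: psh_def pcompose_mult)

lemma psh_eq_0_iff: "psh n (p::'k::field poly) = 0 \<longleftrightarrow> p = 0"
  by (simp add: psh_def pcompose_eq_0_iff)

lemma psh_0: "psh 0 p = p"
  by (simp add: psh_def)

lemma psh_1: "psh n (1::'k::field poly) = 1"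
  by (simp add: psh_def pcompose_1)

lemma psh_psh: "psh n (psh m (p::'k::field poly)) = psh (n + m) p"
proof -
  have "pcompose [:of_int m, 1:] [:of_int n, (1::'k):] = [:of_int (n + m), 1:]"
    by (simp add: pcompose_pCons)
  then show ?thesis
    unfolding psh_def by (metis pcompose_assoc)
qed

text \<open>\<open>fsh\<close> shifts an arbitrarily chosen representative of the fraction; on polynomials
every representative gives the same result.\<close>

lemma fsh_to_fract: "fsh n (to_fract (h::'k::field poly)) = to_fract (psh n h)"
proof -
  let ?P = "\<lambda>pq. snd pq \<noteq> 0 \<and> to_fract h = Fract (fst pq) (snd pq)"
  define pq where "pq = (SOME pq. ?P pq)"
  have "?P (h, 1)"
    by (simp add: Fract_conv_to_fract)
  then have "?P pq"
    unfolding pq_def by (rule someI)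
  then have q0: "snd pq \<noteq> 0" and e: "fst pq = h * snd pq"
    by (auto simp: eq_fract to_fract_def)
  have "fsh n (to_fract h) = Fract (psh n (fst pq)) (psh n (snd pq))"
    unfolding fsh_def pq_def Let_def by simp
  also have "\<dots> = to_fract (psh n h)"
    using q0 by (simp add: e psh_mult eq_fract to_fract_def psh_eq_0_iff)
  finally show ?thesis .
qed

lemma fsh_0: "fsh n (0::'k::field poly fract) = 0"
  using fsh_to_fract[of n "0::'k poly"] by (simp add: psh_def)

lemma fsh_1: "fsh n (1::'k::field poly fract) = 1"
  using fsh_to_fract[of n "1::'k poly"] by (simp add: psh_1)

lemma qhom_0: "qhom i 0 = qzero"
  by (auto simp: qhom_def qzero_def)

lemma qhom_inject: "qhom i g = qhom i h \<longleftrightarrow> g = h"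
  by (metis qhom_def)

lemma qhom_in_homog: "qhom i g \<in> homog i"
  by (simp add: homog_def qhom_def)

lemma qadd_qhom_fun_upd: "qadd (qhom i (p i)) (p(i := 0)) = p"
  by (auto simp: qadd_def qhom_def)

lemma qmult_qhom: "qmult (qhom i g) (qhom j (h::'k::field poly fract)) = qhom (i + j) (g * fsh i h)"
proof (cases "g = 0")
  case True
  then show ?thesis by (auto simp: qmult_def qhom_def)
next
  case False
  then have "{k. qhom i g k \<noteq> 0} = {i}"
    by (auto simp: qhom_def)
  then show ?thesis
    using False by (auto simp: qmult_def qhom_def fsh_0 fun_eq_iff)
qed

lemma qmult_qhom_qx: "qmult (qhom i g) qx = qhom (i + 1) (g::'k::field poly fract)"
  by (simp add: qx_def qmult_qhom fsh_1)

lemma qmult_qhom_poly: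
  "qmult (qhom i h) (qhom 0 (to_fract (psh (- i) r))) = qhom i (h * to_fract (r::'k::field poly))"
  by (simp add: qmult_qhom fsh_to_fract psh_psh psh_0)

subsection \<open>Graded submodules are determined by their homogeneous components\<close>

lemma right_submod_mem_of_components:
  assumes sub: "right_submod \<alpha> I"
    and "finite S" "{i. p i \<noteq> 0} \<subseteq> S" "\<forall>i. qhom i (p i) \<in> I"
  shows "p \<in> I"
  using assms(2-)
proof (induction S arbitrary: p rule: finite_induct)
  case empty
  then have "p = qzero"
    by (auto simp: qzero_def)
  then show ?case
    using sub by (simp add: right_submod_def)
next
  case (insert x S)
  have "p(x := 0) \<in> I"
    using insert.prems sub by (intro insert.IH) (auto simp: qhom_0 right_submod_def)
  moreover have "qhom x (p x) \<in> I"
    using insert.prems by blast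
  ultimately show ?case
    using sub qadd_qhom_fun_upd[of x p] unfolding right_submod_def by metis
qed

lemma graded_submod_mem_iff:
  assumes "right_submod \<alpha> I" "graded I"
  shows "p \<in> I \<longleftrightarrow> finite {i. p i \<noteq> 0} \<and> (\<forall>i. qhom i (p i) \<in> I)"
  using assms right_submod_mem_of_components[OF assms(1) _ order_refl, of p]
  by (auto simp: right_submod_def graded_def Qgr_def)

lemma graded_submod_fun_upd_zero:
  assumes "right_submod \<alpha> I" "graded I" "p \<in> I"
  shows "p(x := 0) \<in> I"
proof -
  have "finite {i. p i \<noteq> 0}"
    using assms graded_submod_mem_iff by blast
  then have "finite {i. (p(x := 0)) i \<noteq> 0}"
    by (rule finite_subset[rotated]) auto
  moreover have "qhom i ((p(x := 0)) i) \<in> I" for i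
    using assms by (cases "i = x") (auto simp: qhom_0 right_submod_def graded_def)
  ultimately show ?thesis
    using graded_submod_mem_iff[OF assms(1,2)] by blast
qed

definition const_assoc :: "'k::field poly fract \<Rightarrow> 'k poly fract \<Rightarrow> bool" where
  "const_assoc x y \<longleftrightarrow> (\<exists>\<kappa>. \<kappa> \<noteq> 0 \<and> x = to_fract [:\<kappa>:] * y)"

lemma const_assocI: "\<kappa> \<noteq> 0 \<Longrightarrow> x = to_fract [:\<kappa>:] * y \<Longrightarrow> const_assoc x y"
  unfolding const_assoc_def by blast

lemma const_assocE:
  assumes "const_assoc x y"
  obtains \<kappa> where "\<kappa> \<noteq> 0" "x = to_fract [:\<kappa>:] * y"
  using assms unfolding const_assoc_def by blast

lemma to_fract_const_mult: "to_fract [:\<kappa>:] * to_fract [:\<mu>:] = to_fract [:\<kappa> * \<mu>:]"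
  by (simp flip: to_fract_mult)

lemma to_fract_const_divide:
  "(\<mu>::'k::field) \<noteq> 0 \<Longrightarrow> to_fract [:\<kappa>:] / to_fract [:\<mu>:] = to_fract [:\<kappa> / \<mu>:]"
  by (simp add: divide_eq_eq to_fract_const_mult)

lemma const_assoc_refl: "const_assoc x x"
  by (rule const_assocI[of 1]) (simp_all flip: one_pCons)

lemma const_assoc_sym:
  assumes "const_assoc x y"
  shows "const_assoc y x"
proof -
  obtain \<kappa> where "\<kappa> \<noteq> 0" "x = to_fract [:\<kappa>:] * y"
    using assms by (rule const_assocE)
  then show ?thesis
    by (intro const_assocI[of "1 / \<kappa>"]) (simp_all flip: to_fract_const_divide one_pCons)
qed

lemma const_assoc_trans:
  assumes "const_assoc x y" "const_assoc y z"
  shows "const_assoc x z"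
proof -
  obtain \<kappa> \<mu> where "\<kappa> \<noteq> 0" "x = to_fract [:\<kappa>:] * y" "\<mu> \<noteq> 0" "y = to_fract [:\<mu>:] * z"
    using assms by (elim const_assocE)
  then show ?thesis
    by (intro const_assocI[of "\<kappa> * \<mu>"]) (simp_all flip: to_fract_const_mult)
qed

lemma const_assoc_nonzero: "const_assoc x y \<Longrightarrow> y \<noteq> 0 \<Longrightarrow> x \<noteq> 0"
  by (auto elim: const_assocE)

lemma const_assoc_cong:
  "const_assoc x x' \<Longrightarrow> const_assoc y y' \<Longrightarrow> const_assoc x y \<longleftrightarrow> const_assoc x' y'"
  by (meson const_assoc_sym const_assoc_trans)

lemma const_assoc_divide:
  assumes "const_assoc x x'" "const_assoc y y'"
  shows "const_assoc (x / y) (x' / y')"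
proof -
  obtain \<kappa> \<mu> where "\<kappa> \<noteq> 0" "x = to_fract [:\<kappa>:] * x'" "\<mu> \<noteq> 0" "y = to_fract [:\<mu>:] * y'"
    using assms by (elim const_assocE)
  then show ?thesis
    by (intro const_assocI[of "\<kappa> / \<mu>"]) (simp_all flip: to_fract_const_divide)
qed

lemma const_assoc_multiple_iff:
  assumes "const_assoc x y"
  shows "(\<exists>p. g = to_fract p * x) \<longleftrightarrow> (\<exists>p. g = to_fract p * y)"
proof -
  have *: "\<exists>p. g = to_fract p * y" if xy: "const_assoc x y" and g: "g = to_fract p * x" for x y p
  proof -
    obtain \<kappa> where "\<kappa> \<noteq> 0" and x: "x = to_fract [:\<kappa>:] * y"
      using xy by (rule const_assocE)
    have "g = to_fract (p * [:\<kappa>:]) * y"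
      unfolding g x by (simp only: to_fract_mult mult.assoc)
    then show ?thesis ..
  qed
  show ?thesis
    using *[OF assms] *[OF const_assoc_sym[OF assms]] by blast
qed

lemma monic_eq_iff_const_assoc:
  fixes c d :: "'k::field poly"
  assumes "lead_coeff c = 1" "lead_coeff d = 1"
  shows "c = d \<longleftrightarrow> const_assoc (to_fract c) (to_fract d)"
proof
  assume "const_assoc (to_fract c) (to_fract d)"
  then obtain \<kappa> where "\<kappa> \<noteq> 0" "to_fract c = to_fract [:\<kappa>:] * to_fract d"
    by (rule const_assocE)
  then have "c = smult \<kappa> d"
    by (simp flip: to_fract_mult)
  moreover from this have "\<kappa> = 1"
    using assms \<open>\<kappa> \<noteq> 0\<close> by simp
  ultimately show "c = d"
    by simp
qed (simp add: const_assoc_refl)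

definition homog_gens :: "'k::field qel set \<Rightarrow> (int \<Rightarrow> 'k poly fract) \<Rightarrow> bool" where
  "homog_gens I a \<longleftrightarrow> (\<forall>i. a i \<noteq> 0 \<and> {g. qhom i g \<in> I} = {to_fract p * a i | p. True})"

lemma homog_gens_mem_iff:
  "homog_gens I a \<Longrightarrow> qhom i g \<in> I \<longleftrightarrow> (\<exists>p. g = to_fract p * a i)"
  unfolding homog_gens_def by blast

lemma homog_gens_mem: "homog_gens I a \<Longrightarrow> qhom i (a i) \<in> I"
  by (metis homog_gens_mem_iff mult_1 to_fract_1)

lemma homog_gens_nonzero: "homog_gens I a \<Longrightarrow> a i \<noteq> 0"
  unfolding homog_gens_def by blast

lemma struct_consts_homog_gens:
  assumes "struct_consts I c"
  obtains a where "homog_gens I a"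
    and "\<And>i. lead_coeff (c i) = 1" "\<And>i. const_assoc (to_fract (c i)) (a i / a (i + 1))"
proof -
  obtain a where "\<forall>i. a i \<noteq> 0 \<and> {g. qhom i g \<in> I} = {to_fract p * a i | p. True}"
    and "\<forall>i. lead_coeff (c i) = 1 \<and> (\<exists>u. u \<noteq> 0 \<and> to_fract (c i) = to_fract [:u:] * (a i / a (i + 1)))"
    using assms unfolding struct_consts_def by blast
  then show thesis
    by (intro that[of a]) (simp_all add: homog_gens_def const_assoc_def)
qed

subsection \<open>Graded isomorphisms preserve the structure constants\<close>

locale graded_module_iso =
  fixes \<alpha> :: "'k::field" and I J :: "'k qel set" and \<phi> :: "'k qel \<Rightarrow> 'k qel"
  assumes submod: "right_submod \<alpha> I" and graded: "graded I"
    and bij: "bij_betw \<phi> I J"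
    and additive: "\<forall>p\<in>I. \<forall>q\<in>I. \<phi> (qadd p q) = qadd (\<phi> p) (\<phi> q)"
    and A_linear: "\<forall>p\<in>I. \<forall>a\<in>Aset \<alpha>. \<phi> (qmult p a) = qmult (\<phi> p) a"
    and degree_preserving: "\<forall>p\<in>I. \<forall>i. p \<in> homog i \<longrightarrow> \<phi> p \<in> homog i"
begin

lemma map_qzero: "\<phi> qzero = qzero"
proof -
  have "qzero \<in> I"
    using submod by (simp add: right_submod_def)
  moreover have "qadd qzero qzero = qzero"
    by (simp add: qadd_def qzero_def)
  ultimately have "\<phi> qzero = qadd (\<phi> qzero) (\<phi> qzero)"
    using additive by metis
  then have "\<phi> qzero n = \<phi> qzero n + \<phi> qzero n" for n
    by (metis qadd_def)
  then have "\<phi> qzero n = 0" for n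
    by (metis add_cancel_left_right)
  then show ?thesis
    by (simp add: qzero_def fun_eq_iff)
qed

lemma map_component:
  assumes "p \<in> I"
  shows "\<phi> p i = \<phi> (qhom i (p i)) i"
proof -
  have "finite S \<Longrightarrow> {j. p j \<noteq> 0} \<subseteq> S \<Longrightarrow> p \<in> I \<Longrightarrow> \<phi> p i = \<phi> (qhom i (p i)) i" for S p
  proof (induction S arbitrary: p rule: finite_induct)
    case empty
    then have "p = qzero"
      by (auto simp: qzero_def)
    then show ?case
      by (simp add: qhom_0 map_qzero qzero_def[THEN fun_cong])
  next
    case (insert x S)
    have px: "qhom x (p x) \<in> I"
      using insert.prems graded by (simp add: graded_def)
    have p'_in: "p(x := 0) \<in> I"
      using graded_submod_fun_upd_zero[OF submod graded insert.prems(2)] .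
    have IH: "\<phi> (p(x := 0)) i = \<phi> (qhom i ((p(x := 0)) i)) i"
      by (rule insert.IH) (use insert.prems(1) p'_in in \<open>auto simp: fun_upd_def\<close>)
    have "\<phi> p = \<phi> (qadd (qhom x (p x)) (p(x := 0)))"
      by (simp only: qadd_qhom_fun_upd)
    also have "\<dots> = qadd (\<phi> (qhom x (p x))) (\<phi> (p(x := 0)))"
      using additive px p'_in by blast
    finally have "\<phi> p i = \<phi> (qhom x (p x)) i + \<phi> (p(x := 0)) i"
      by (simp add: qadd_def)
    moreover have "\<phi> (qhom x (p x)) i = 0" if "x \<noteq> i"
    proof -
      have "\<phi> (qhom x (p x)) \<in> homog x"
        using degree_preserving px qhom_in_homog by blast
      then show ?thesis
        using that by (simp add: homog_def)
    qed
    ultimately show ?case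
      using IH by (cases "x = i") (simp_all add: qhom_0 map_qzero qzero_def[THEN fun_cong])
  qed
  moreover have "finite {j. p j \<noteq> 0}"
    using assms submod by (auto simp: right_submod_def Qgr_def)
  ultimately show ?thesis
    using assms by blast
qed

lemma map_qhom:
  assumes "qhom i g \<in> I"
  shows "\<phi> (qhom i g) = qhom i (\<phi> (qhom i g) i)"
  using degree_preserving assms qhom_in_homog by (fastforce simp: homog_def qhom_def)

lemma map_qhom_mult_poly:
  assumes "qhom i g \<in> I"
  shows "\<phi> (qhom i (g * to_fract r)) = qhom i (\<phi> (qhom i g) i * to_fract r)"
proof -
  have "qhom 0 (to_fract (psh (- i) r)) \<in> Aset \<alpha>"
    by (rule Aset.poly_in)
  then have "\<phi> (qhom i (g * to_fract r)) = qmult (\<phi> (qhom i g)) (qhom 0 (to_fract (psh (- i) r)))"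
    using A_linear assms by (metis qmult_qhom_poly)
  then show ?thesis
    using map_qhom[OF assms] by (metis qmult_qhom_poly)
qed

text \<open>The image of a generator \<open>a\<^sub>i x\<^sup>i\<close> is \<open>t b\<^sub>i x\<^sup>i\<close>, and surjectivity in degree \<open>i\<close> forces
\<open>t\<close> to be a unit of \<open>k[z]\<close>.\<close>

lemma map_generator:
  assumes a: "homog_gens I a" and b: "homog_gens J b"
  shows "const_assoc (\<phi> (qhom i (a i)) i) (b i)"
proof -
  define s where "s = \<phi> (qhom i (a i)) i"
  have a_in: "qhom i (a i) \<in> I"
    by (rule homog_gens_mem[OF a])
  have "\<phi> (qhom i (a i)) = qhom i s"
    unfolding s_def by (rule map_qhom[OF a_in])
  then have "qhom i s \<in> J"
    using bij_betw_apply[OF bij a_in] by simp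
  then obtain t where t: "s = to_fract t * b i"
    by (auto simp: homog_gens_mem_iff[OF b])
  have "qhom i (b i) \<in> \<phi> ` I"
    using homog_gens_mem[OF b] bij by (simp add: bij_betw_def)
  then obtain w where w_in: "w \<in> I" and w: "\<phi> w = qhom i (b i)"
    by (metis imageE)
  have "qhom i (w i) \<in> I"
    using graded w_in by (simp add: graded_def)
  then obtain p where p: "w i = to_fract p * a i"
    by (auto simp: homog_gens_mem_iff[OF a])
  have "b i = \<phi> w i"
    using w by (simp add: qhom_def)
  also have "\<dots> = \<phi> (qhom i (to_fract p * a i)) i"
    using map_component[OF w_in, of i] p by simp
  also have "\<dots> = s * to_fract p"
    using map_qhom_mult_poly[OF a_in, of p] by (simp add: s_def mult.commute qhom_def)
  finally have bi: "b i = s * to_fract p" .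
  have "b i * to_fract (t * p) = s * to_fract p"
    by (simp add: t mult_ac)
  then have "b i * to_fract (t * p) = b i"
    using bi by simp
  then have "to_fract (t * p) = to_fract 1"
    using homog_gens_nonzero[OF b, of i] by (simp del: to_fract_mult)
  then have "is_unit t"
    by (metis dvdI to_fract_eq_iff)
  then obtain \<tau> where t_const: "t = [:\<tau>:]" and "\<tau> dvd 1"
    by (auto simp: is_unit_poly_iff)
  then have "\<tau> \<noteq> 0"
    by auto
  then have "const_assoc s (b i)"
    using t t_const by (intro const_assocI[of \<tau>]) simp_all
  then show ?thesis
    by (simp only: s_def)
qed

lemma generator_ratio_const_assoc:
  assumes a: "homog_gens I a" and b: "homog_gens J b"
  shows "const_assoc (a i / a (i + 1)) (b i / b (i + 1))"
proof -
  define s where "s j = \<phi> (qhom j (a j)) j" for j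
  have a_in: "qhom j (a j) \<in> I" for j
    by (rule homog_gens_mem[OF a])
  have s_b: "const_assoc (s j) (b j)" for j
    unfolding s_def by (rule map_generator[OF a b])
  have map_a: "\<phi> (qhom j (a j)) = qhom j (s j)" for j
    unfolding s_def by (rule map_qhom[OF a_in])
  have "qmult (qhom i (a i)) qx \<in> I"
    using submod a_in Aset.x_in unfolding right_submod_def by blast
  then obtain e where e: "a i = to_fract e * a (i + 1)"
    by (auto simp: qmult_qhom_qx homog_gens_mem_iff[OF a])
  have "qhom (i + 1) (s i) = qmult (\<phi> (qhom i (a i))) qx"
    by (simp add: map_a qmult_qhom_qx)
  also have "\<dots> = \<phi> (qmult (qhom i (a i)) qx)"
    by (simp add: A_linear a_in Aset.x_in)
  also have "\<dots> = \<phi> (qhom (i + 1) (a (i + 1) * to_fract e))"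
    by (simp only: qmult_qhom_qx e mult.commute)
  also have "\<dots> = qhom (i + 1) (s (i + 1) * to_fract e)"
    using map_qhom_mult_poly[OF a_in] by (simp add: s_def)
  finally have "s i = s (i + 1) * to_fract e"
    by (simp add: qhom_inject)
  moreover have "s (i + 1) \<noteq> 0"
    using const_assoc_nonzero[OF s_b homog_gens_nonzero[OF b]] .
  ultimately have "a i / a (i + 1) = s i / s (i + 1)"
    using e homog_gens_nonzero[OF a] by simp
  then show ?thesis
    using const_assoc_divide[OF s_b s_b] by simp
qed

end

lemma graded_iso_imp_ratio_const_assoc:
  assumes "right_submod \<alpha> I" "graded I" "graded_iso \<alpha> I J"
    and "homog_gens I a" "homog_gens J b"
  shows "const_assoc (a i / a (i + 1)) (b i / b (i + 1))"
proof -
  obtain \<phi> where "graded_module_iso \<alpha> I J \<phi>"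
    using assms(1-3) unfolding graded_iso_def graded_module_iso_def by blast
  then show ?thesis
    using assms(4,5) by (rule graded_module_iso.generator_ratio_const_assoc)
qed

subsection \<open>Scaling gives the converse\<close>

lemma graded_iso_scale:
  assumes subI: "right_submod \<alpha> I" and grI: "graded I"
    and subJ: "right_submod \<alpha> J" and grJ: "graded J"
    and Q: "Q \<noteq> 0" and scale: "\<And>i h. qhom i (Q * h) \<in> J \<longleftrightarrow> qhom i h \<in> I"
  shows "graded_iso \<alpha> I J"
proof -
  define \<phi> where "\<phi> p = (\<lambda>n. Q * p n)" for p :: "'a qel"
  have supp: "{i. \<phi> p i \<noteq> 0} = {i. p i \<noteq> 0}" for p
    using Q by (simp add: \<phi>_def)
  have mem: "\<phi> p \<in> J \<longleftrightarrow> p \<in> I" for p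
    unfolding graded_submod_mem_iff[OF subI grI, of p] graded_submod_mem_iff[OF subJ grJ, of "\<phi> p"]
      supp by (simp add: \<phi>_def scale)
  have "inj_on \<phi> I"
    using Q by (auto intro!: inj_onI simp: \<phi>_def fun_eq_iff)
  moreover have "\<phi> ` I = J"
  proof
    show "\<phi> ` I \<subseteq> J"
      using mem by blast
    show "J \<subseteq> \<phi> ` I"
    proof
      fix q assume "q \<in> J"
      moreover have q: "q = \<phi> (\<lambda>n. q n / Q)"
        using Q by (simp add: \<phi>_def)
      ultimately have "(\<lambda>n. q n / Q) \<in> I"
        using mem by metis
      with q show "q \<in> \<phi> ` I"
        by (rule image_eqI)
    qed
  qed
  ultimately have "bij_betw \<phi> I J"
    by (simp add: bij_betw_def)
  moreover have "\<phi> (qadd p q) = qadd (\<phi> p) (\<phi> q)" for p q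
    by (simp add: \<phi>_def qadd_def distrib_left)
  moreover have "\<phi> (qmult p r) = qmult (\<phi> p) r" for p r
    unfolding qmult_def supp by (simp add: \<phi>_def sum_distrib_left mult.assoc)
  moreover have "p \<in> homog i \<Longrightarrow> \<phi> p \<in> homog i" for p i
    by (simp add: homog_def \<phi>_def)
  ultimately show ?thesis
    unfolding graded_iso_def by blast
qed

lemma const_assoc_int_seq:
  fixes r :: "int \<Rightarrow> 'k::field poly fract"
  assumes "\<And>i. const_assoc (r (i + 1)) (r i)"
  shows "const_assoc (r i) (r 0)"
proof (induction i rule: int_induct[where k = 0])
  case base
  show ?case by (rule const_assoc_refl)
next
  case (step1 i)
  then show ?case
    using assms const_assoc_trans by blast
next
  case (step2 i)
  then show ?case
    using assms[of "i - 1"] const_assoc_sym const_assoc_trans by fastforce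
qed

text \<open>If \<open>a\<^sub>i/a\<^sub>i\<^sub>+\<^sub>1 = \<kappa> b\<^sub>i/b\<^sub>i\<^sub>+\<^sub>1\<close> then \<open>b\<^sub>i\<^sub>+\<^sub>1/a\<^sub>i\<^sub>+\<^sub>1 = \<kappa> b\<^sub>i/a\<^sub>i\<close>, so every \<open>b\<^sub>i/a\<^sub>i\<close> is a
constant multiple of \<open>b\<^sub>0/a\<^sub>0\<close>.\<close>

lemma graded_iso_of_ratio_const_assoc:
  assumes "right_submod \<alpha> I" "graded I" "right_submod \<alpha> J" "graded J"
    and a: "homog_gens I a" and b: "homog_gens J b"
    and ratio: "\<And>i. const_assoc (a i / a (i + 1)) (b i / b (i + 1))"
  shows "graded_iso \<alpha> I J"
proof (rule graded_iso_scale[OF assms(1-4)])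
  note a_nz = homog_gens_nonzero[OF a] and b_nz = homog_gens_nonzero[OF b]
  define Q where "Q = b 0 / a 0"
  show "Q \<noteq> 0"
    using a_nz b_nz by (simp add: Q_def)
  have "const_assoc (b (i + 1) / a (i + 1)) (b i / a i)" for i
  proof -
    obtain \<kappa> where "\<kappa> \<noteq> 0" and "a i / a (i + 1) = to_fract [:\<kappa>:] * (b i / b (i + 1))"
      using ratio by (rule const_assocE)
    then show ?thesis
      using a_nz b_nz by (intro const_assocI[of \<kappa>]) (simp_all add: field_simps)
  qed
  then have ratio_Q: "const_assoc (b i / a i) Q" for i
    unfolding Q_def by (rule const_assoc_int_seq)
  have b_Qa: "const_assoc (b i) (Q * a i)" for i
  proof -
    obtain \<kappa> where "\<kappa> \<noteq> 0" and "b i / a i = to_fract [:\<kappa>:] * Q"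
      using ratio_Q by (rule const_assocE)
    then show ?thesis
      using a_nz by (intro const_assocI[of \<kappa>]) (simp_all add: field_simps)
  qed
  have "(\<exists>p. Q * h = to_fract p * b i) \<longleftrightarrow> (\<exists>p. h = to_fract p * a i)" for i h
    using const_assoc_multiple_iff[OF b_Qa, of "Q * h"] \<open>Q \<noteq> 0\<close> by (simp add: mult.left_commute)
  then show "qhom i (Q * h) \<in> J \<longleftrightarrow> qhom i h \<in> I" for i h
    by (simp add: homog_gens_mem_iff[OF a] homog_gens_mem_iff[OF b])
qed

theorem lemma3p4:
  fixes \<alpha> :: "'k::field_char_0"
    and I J :: "'k qel set"
    and c d :: "int \<Rightarrow> 'k poly"
  assumes "alg_closed TYPE('k)"
    and "fg_graded_submod \<alpha> I" and "fg_graded_submod \<alpha> J"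
    and "struct_consts I c" and "struct_consts J d"
  shows "graded_iso \<alpha> I J \<longleftrightarrow> (\<forall>i. c i = d i)"
proof -
  obtain a where a: "homog_gens I a" and c: "\<And>i. lead_coeff (c i) = 1"
    and ca: "\<And>i. const_assoc (to_fract (c i)) (a i / a (i + 1))"
    using struct_consts_homog_gens[OF assms(4)] by blast
  obtain b where b: "homog_gens J b" and d: "\<And>i. lead_coeff (d i) = 1"
    and db: "\<And>i. const_assoc (to_fract (d i)) (b i / b (i + 1))"
    using struct_consts_homog_gens[OF assms(5)] by blast
  have sub: "right_submod \<alpha> I" "graded I" "right_submod \<alpha> J" "graded J"
    using assms(2,3) by (simp_all add: fg_graded_submod_def)
  have "graded_iso \<alpha> I J \<longleftrightarrow> (\<forall>i. const_assoc (a i / a (i + 1)) (b i / b (i + 1)))"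
    using graded_iso_imp_ratio_const_assoc[OF sub(1,2) _ a b]
      graded_iso_of_ratio_const_assoc[OF sub a b] by blast
  also have "\<dots> \<longleftrightarrow> (\<forall>i. c i = d i)"
    by (simp add: monic_eq_iff_const_assoc[OF c d] const_assoc_cong[OF ca db])
  finally show ?thesis .
qed

end
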